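(* Let $\mathbf V$ be an $n$-dimensional $\mathbb Q(v,t)$-vector space with basis $\mathbf v_1,\dots,\mathbf v_n$, and for $\mathbf r=(r_1,\dots,r_d)\in[1,n]^d$ write $\mathbf v_{\mathbf r}=\mathbf v_{r_1}\otimes\cdots\otimes\mathbf v_{r_d}$. The formula, for $1\le j\le d-1$, $$\mathbf v_{r_1\cdots r_d}T_j=\begin{cases}\mathbf v_{r_1\cdots r_{j-1}r_{j+1}r_j\cdots r_d}, & r_j<r_{j+1},\\ vt\,\mathbf v_{r_1\cdots r_d}, & r_j=r_{j+1},\\ (vt-v^{-1}t)\mathbf v_{r_1\cdots r_d}+t^2\mathbf v_{r_1\cdots r_{j-1}r_{j+1}r_j\cdots r_d}, & r_j>r_{j+1},\end{cases}$$ extended linearly, defines a right action of $H_d(v,t)$ on $\mathbf V^{\otimes d}$.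
   Context: The two-parameter Iwahori–Hecke algebra $H_d(v,t)$ is the unital associative $\mathbb Q(v,t)$-algebra generated by $T_1,\dots,T_{d-1}$ subject to $T_i^2=(vt-v^{-1}t)T_i+t^2$ ($1\le i\le d-1$), $T_jT_{j+1}T_j=T_{j+1}T_jT_{j+1}$ ($1\le j\le d-2$), $T_iT_j=T_jT_i$ ($|i-j|>1$). *)

theory Defs
  imports "HOL-Computational_Algebra.Polynomial" "HOL-Computational_Algebra.Fraction_Field"
begin

text \<open>The field Q(v,t), realised as the fraction field of Q[v][t].\<close>
type_synonym Qvt = "rat poly poly fract"

definition qv :: Qvt where "qv = Fract [:[:0, 1:]:] 1"
definition qt :: Qvt where "qt = Fract [:0, 1:] 1"

text \<open>Index set [1,n]^d of basis tensors v_r, r = (r_1,...,r_d) stored as a list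
  (r_k = r ! (k-1)).\<close>
definition tuples :: "nat \<Rightarrow> nat \<Rightarrow> nat list set" where
  "tuples n d = {r. length r = d \<and> set r \<subseteq> {1..n}}"

text \<open>V^{\<otimes>d}: vectors are coefficient functions supported on tuples n d.\<close>
definition tensor_space :: "nat \<Rightarrow> nat \<Rightarrow> (nat list \<Rightarrow> 'a::field) set" where
  "tensor_space n d = {x. \<forall>r. r \<notin> tuples n d \<longrightarrow> x r = 0}"

definition bvec :: "nat list \<Rightarrow> (nat list \<Rightarrow> 'a::field)" where
  "bvec r = (\<lambda>s. if s = r then 1 else 0)"

text \<open>Swap positions j and j+1 (1-based) of r.\<close>
definition swp :: "nat \<Rightarrow> nat list \<Rightarrow> nat list" where
  "swp j r = r[j - 1 := r ! j, j := r ! (j - 1)]"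

definition basis_act :: "'a::field \<Rightarrow> 'a \<Rightarrow> nat \<Rightarrow> nat list \<Rightarrow> (nat list \<Rightarrow> 'a)" where
  "basis_act v t j r =
     (if r ! (j - 1) < r ! j then bvec (swp j r)
      else if r ! (j - 1) = r ! j then (\<lambda>s. v * t * bvec r s)
      else (\<lambda>s. (v * t - inverse v * t) * bvec r s + t ^ 2 * bvec (swp j r) s))"

definition act :: "'a::field \<Rightarrow> 'a \<Rightarrow> nat \<Rightarrow> nat \<Rightarrow> nat \<Rightarrow> (nat list \<Rightarrow> 'a) \<Rightarrow> (nat list \<Rightarrow> 'a)" where
  "act v t n d j x = (\<lambda>s. \<Sum>r\<in>tuples n d. x r * basis_act v t j r s)"

end

theory Submission
  imports Defs
begin

text \<open>Every operator involved commutes with finite linear combinations, so each relation only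
  has to be checked on basis tensors. On a basis tensor, \<open>T\<^sub>j\<close> only reads and permutes the
  entries at positions \<open>j\<close> and \<open>j + 1\<close>; parametrising the tensor by the two, three or four
  entries involved, each relation becomes a finite case distinction on the relative order of these
  entries, and in each case an identity of Laurent polynomials in \<open>v\<close> and \<open>t\<close>.\<close>

lemma finite_tuples: "finite (tuples n d)"
proof -
  have "tuples n d = {xs. set xs \<subseteq> {1..n} \<and> length xs = d}"
    unfolding tuples_def by auto
  then show ?thesis
    using finite_lists_length_eq[of "{1..n}" d] by simp
qed

lemma length_tuples: "r \<in> tuples n d \<Longrightarrow> length r = d"
  unfolding tuples_def by simp

lemma nth_tuples: "r \<in> tuples n d \<Longrightarrow> k < d \<Longrightarrow> r ! k \<in> {1..n}"
  unfolding tuples_def by (auto dest: nth_mem)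

lemma list_update_tuples: "r \<in> tuples n d \<Longrightarrow> x \<in> {1..n} \<Longrightarrow> r[k := x] \<in> tuples n d"
  unfolding tuples_def using set_update_subset_insert[of r k x] by auto

lemma swp_tuples: "r \<in> tuples n d \<Longrightarrow> 1 \<le> j \<Longrightarrow> j < d \<Longrightarrow> swp j r \<in> tuples n d"
  unfolding swp_def by (intro list_update_tuples nth_tuples) auto

lemma tensor_space_expansion:
  assumes "x \<in> tensor_space n d"
  shows "x = (\<lambda>s. \<Sum>r\<in>tuples n d. x r * bvec r s)"
proof
  fix s
  have "(\<Sum>r\<in>tuples n d. x r * bvec r s) = (\<Sum>r\<in>tuples n d. if s = r then x r else 0)"
    by (rule sum.cong) (auto simp: bvec_def)
  also have "\<dots> = x s"
    using assms finite_tuples[of n d] by (simp add: tensor_space_def)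
  finally show "x s = (\<Sum>r\<in>tuples n d. x r * bvec r s)" ..
qed

lemma act_bvec:
  assumes "r \<in> tuples n d"
  shows "act v t n d j (bvec r) = basis_act v t j r"
proof
  fix s
  have "(\<Sum>q\<in>tuples n d. bvec r q * basis_act v t j q s)
      = (\<Sum>q\<in>tuples n d. if r = q then basis_act v t j q s else 0)"
    by (rule sum.cong) (auto simp: bvec_def)
  then show "act v t n d j (bvec r) s = basis_act v t j r s"
    using assms finite_tuples[of n d] by (simp add: act_def)
qed

lemma act_scale: "act v t n d j (\<lambda>s. a * f s) = (\<lambda>s. a * act v t n d j f s)"
  unfolding act_def by (simp add: sum_distrib_left mult.assoc)

lemma act_add_scaled:
  "act v t n d j (\<lambda>s. a * f s + b * g s) = (\<lambda>s. a * act v t n d j f s + b * act v t n d j g s)"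
  unfolding act_def by (simp add: distrib_right sum.distrib sum_distrib_left mult.assoc)

lemma act_preserves_tensor_space:
  fixes v t :: "'a::field"
  assumes "1 \<le> j" "j < d" "x \<in> tensor_space n d"
  shows "act v t n d j x \<in> tensor_space n d"
  unfolding tensor_space_def mem_Collect_eq
proof (intro allI impI)
  fix s assume s: "s \<notin> tuples n d"
  have "x r * basis_act v t j r s = 0" if r: "r \<in> tuples n d" for r
  proof -
    have "bvec r s = (0 :: 'a)" "bvec (swp j r) s = (0 :: 'a)"
      using r s swp_tuples[OF r assms(1,2)] by (auto simp: bvec_def)
    then show ?thesis
      by (simp add: basis_act_def)
  qed
  then show "act v t n d j x s = 0"
    unfolding act_def by (simp add: sum.neutral)
qed

definition linear_op :: "((nat list \<Rightarrow> 'a::field) \<Rightarrow> nat list \<Rightarrow> 'a) \<Rightarrow> bool" where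
  "linear_op F \<longleftrightarrow>
     (\<forall>(U :: nat list set) c g. F (\<lambda>s. \<Sum>r\<in>U. c r * g r s) = (\<lambda>s. \<Sum>r\<in>U. c r * F (g r) s))"

lemma linear_op_act: "linear_op (act v t n d j)"
  unfolding linear_op_def act_def
  by (intro allI ext) (simp add: sum_distrib_left sum_distrib_right mult.assoc, rule sum.swap)

lemma linear_op_id: "linear_op (\<lambda>x. x)"
  unfolding linear_op_def by simp

lemma linear_op_comp: "linear_op F \<Longrightarrow> linear_op G \<Longrightarrow> linear_op (\<lambda>x. F (G x))"
  unfolding linear_op_def by simp

lemma linear_op_add_scaled:
  "linear_op F \<Longrightarrow> linear_op G \<Longrightarrow> linear_op (\<lambda>x s. a * F x s + b * G x s)"
  unfolding linear_op_def by (simp add: sum.distrib sum_distrib_left algebra_simps)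

lemma linear_op_eqI:
  assumes "linear_op F" "linear_op G" "x \<in> tensor_space n d"
    and "\<And>r. r \<in> tuples n d \<Longrightarrow> F (bvec r) = G (bvec r)"
  shows "F x = G x"
proof -
  have "F x = F (\<lambda>s. \<Sum>r\<in>tuples n d. x r * bvec r s)"
    using tensor_space_expansion[OF assms(3)] by simp
  also have "\<dots> = (\<lambda>s. \<Sum>r\<in>tuples n d. x r * F (bvec r) s)"
    using assms(1) by (simp add: linear_op_def)
  also have "\<dots> = (\<lambda>s. \<Sum>r\<in>tuples n d. x r * G (bvec r) s)"
    using assms(4) by simp
  also have "\<dots> = G (\<lambda>s. \<Sum>r\<in>tuples n d. x r * bvec r s)"
    using assms(2) by (simp add: linear_op_def)
  also have "\<dots> = G x"
    using tensor_space_expansion[OF assms(3)] by simp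
  finally show ?thesis .
qed

lemma quadratic_relation_bvec_family:
  fixes v t :: "'a::field"
  assumes "v \<noteq> 0"
    and mem: "\<And>x y. x \<in> S \<Longrightarrow> y \<in> S \<Longrightarrow> P x y \<in> tuples n d"
    and swap: "\<And>x y. swp j (P x y) = P y x"
    and entries: "\<And>x y. P x y ! (j - 1) = x" "\<And>x y. P x y ! j = y"
    and params: "a \<in> S" "b \<in> S"
    and r: "r = P a b"
  shows "act v t n d j (act v t n d j (bvec r))
    = (\<lambda>s. (v * t - inverse v * t) * act v t n d j (bvec r) s + t ^ 2 * bvec r s)"
  unfolding r using params
  by (cases a b rule: linorder_cases)
    (simp_all add: act_bvec mem basis_act_def swap entries[simplified] act_scale act_add_scaled,
      simp_all add: fun_eq_iff field_simps \<open>v \<noteq> 0\<close> power2_eq_square)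

lemma braid_relation_bvec_family:
  fixes v t :: "'a::field"
  assumes "v \<noteq> 0"
    and mem: "\<And>x y z. x \<in> S \<Longrightarrow> y \<in> S \<Longrightarrow> z \<in> S \<Longrightarrow> P x y z \<in> tuples n d"
    and swap: "\<And>x y z. swp i (P x y z) = P y x z" "\<And>x y z. swp (Suc i) (P x y z) = P x z y"
    and entries: "\<And>x y z. P x y z ! (i - 1) = x" "\<And>x y z. P x y z ! i = y"
      "\<And>x y z. P x y z ! Suc i = z"
    and params: "a \<in> S" "b \<in> S" "c \<in> S"
    and r: "r = P a b c"
  shows "act v t n d i (act v t n d (Suc i) (act v t n d i (bvec r)))
    = act v t n d (Suc i) (act v t n d i (act v t n d (Suc i) (bvec r)))"
  unfolding r using params
  by (cases a b rule: linorder_cases; cases b c rule: linorder_cases; cases a c rule: linorder_cases)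
    (simp_all add: act_bvec mem basis_act_def swap entries[simplified] act_scale act_add_scaled,
      simp_all add: fun_eq_iff field_simps \<open>v \<noteq> 0\<close> power2_eq_square)

lemma far_commutation_bvec_family:
  fixes v t :: "'a::field"
  assumes "v \<noteq> 0"
    and mem: "\<And>x y z w. x \<in> S \<Longrightarrow> y \<in> S \<Longrightarrow> z \<in> S \<Longrightarrow> w \<in> S \<Longrightarrow> P x y z w \<in> tuples n d"
    and swap: "\<And>x y z w. swp i (P x y z w) = P y x z w" "\<And>x y z w. swp j (P x y z w) = P x y w z"
    and entries: "\<And>x y z w. P x y z w ! (i - 1) = x" "\<And>x y z w. P x y z w ! i = y"
      "\<And>x y z w. P x y z w ! (j - 1) = z" "\<And>x y z w. P x y z w ! j = w"
    and params: "a \<in> S" "b \<in> S" "c \<in> S" "e \<in> S"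
    and r: "r = P a b c e"
  shows "act v t n d i (act v t n d j (bvec r)) = act v t n d j (act v t n d i (bvec r))"
  unfolding r using params
  by (cases a b rule: linorder_cases; cases c e rule: linorder_cases)
    (simp_all add: act_bvec mem basis_act_def swap entries[simplified] act_scale act_add_scaled,
      simp_all add: fun_eq_iff field_simps \<open>v \<noteq> 0\<close>)

lemma quadratic_relation_bvec:
  fixes v t :: "'a::field"
  assumes "v \<noteq> 0" "r \<in> tuples n d" "1 \<le> j" "j < d"
  shows "act v t n d j (act v t n d j (bvec r))
    = (\<lambda>s. (v * t - inverse v * t) * act v t n d j (bvec r) s + t ^ 2 * bvec r s)"
  using assms length_tuples[OF assms(2)] nth_tuples[OF assms(2)]
  by (intro quadratic_relation_bvec_family[where S = "{1..n}" and P = "\<lambda>x y. r[j - 1 := x, j := y]"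
        and a = "r ! (j - 1)" and b = "r ! j"])
    (auto simp: swp_def nth_list_update list_update_swap intro!: list_update_tuples)

lemma braid_relation_bvec:
  fixes v t :: "'a::field"
  assumes "v \<noteq> 0" "r \<in> tuples n d" "1 \<le> i" "Suc i < d"
  shows "act v t n d i (act v t n d (Suc i) (act v t n d i (bvec r)))
    = act v t n d (Suc i) (act v t n d i (act v t n d (Suc i) (bvec r)))"
  using assms length_tuples[OF assms(2)] nth_tuples[OF assms(2)]
  by (intro braid_relation_bvec_family[where S = "{1..n}"
        and P = "\<lambda>x y z. r[i - 1 := x, i := y, Suc i := z]"
        and a = "r ! (i - 1)" and b = "r ! i" and c = "r ! Suc i"])
    (auto simp: swp_def nth_list_update list_update_swap intro!: list_update_tuples)

lemma far_commutation_bvec: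
  fixes v t :: "'a::field"
  assumes "v \<noteq> 0" "r \<in> tuples n d" "1 \<le> i" "Suc i < j" "j < d"
  shows "act v t n d i (act v t n d j (bvec r)) = act v t n d j (act v t n d i (bvec r))"
  using assms length_tuples[OF assms(2)] nth_tuples[OF assms(2)]
  by (intro far_commutation_bvec_family[where S = "{1..n}"
        and P = "\<lambda>x y z w. r[i - 1 := x, i := y, j - 1 := z, j := w]"
        and a = "r ! (i - 1)" and b = "r ! i" and c = "r ! (j - 1)" and e = "r ! j"])
    (auto simp: swp_def nth_list_update list_update_swap intro!: list_update_tuples)

lemma quadratic_relation:
  fixes v t :: "'a::field"
  assumes "v \<noteq> 0" "1 \<le> j" "j < d" "x \<in> tensor_space n d"
  shows "act v t n d j (act v t n d j x)
    = (\<lambda>s. (v * t - inverse v * t) * act v t n d j x s + t ^ 2 * x s)"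
proof (rule linear_op_eqI[OF _ _ assms(4)])
  show "linear_op (\<lambda>x. act v t n d j (act v t n d j x))"
    by (rule linear_op_comp[OF linear_op_act linear_op_act])
  show "linear_op (\<lambda>x s. (v * t - inverse v * t) * act v t n d j x s + t ^ 2 * x s)"
    by (rule linear_op_add_scaled[OF linear_op_act linear_op_id])
qed (use assms quadratic_relation_bvec in auto)

lemma braid_relation:
  fixes v t :: "'a::field"
  assumes "v \<noteq> 0" "1 \<le> i" "Suc i < d" "x \<in> tensor_space n d"
  shows "act v t n d i (act v t n d (Suc i) (act v t n d i x))
    = act v t n d (Suc i) (act v t n d i (act v t n d (Suc i) x))"
proof (rule linear_op_eqI[OF _ _ assms(4)])
  show "linear_op (\<lambda>x. act v t n d i (act v t n d (Suc i) (act v t n d i x)))"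
    by (intro linear_op_comp[OF linear_op_act] linear_op_act)
  show "linear_op (\<lambda>x. act v t n d (Suc i) (act v t n d i (act v t n d (Suc i) x)))"
    by (intro linear_op_comp[OF linear_op_act] linear_op_act)
qed (use assms braid_relation_bvec in auto)

lemma far_commutation:
  fixes v t :: "'a::field"
  assumes "v \<noteq> 0" "1 \<le> i" "Suc i < j" "j < d" "x \<in> tensor_space n d"
  shows "act v t n d i (act v t n d j x) = act v t n d j (act v t n d i x)"
proof (rule linear_op_eqI[OF _ _ assms(5)])
  show "linear_op (\<lambda>x. act v t n d i (act v t n d j x))"
    by (rule linear_op_comp[OF linear_op_act linear_op_act])
  show "linear_op (\<lambda>x. act v t n d j (act v t n d i x))"
    by (rule linear_op_comp[OF linear_op_act linear_op_act])
qed (use assms far_commutation_bvec in auto)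

lemma qv_nonzero: "qv \<noteq> 0"
  unfolding qv_def by (simp add: Zero_fract_def eq_fract)

theorem mainTheorem8:
  fixes n d :: nat
  defines "T \<equiv> act qv qt n d"
  shows
    "(\<forall>j x. 1 \<le> j \<and> j \<le> d - 1 \<and> x \<in> tensor_space n d \<longrightarrow>
        T j x \<in> tensor_space n d)
   \<and> (\<forall>i j x. 1 \<le> i \<and> i \<le> d - 1 \<and> 1 \<le> j \<and> j \<le> d - 1 \<and> x \<in> tensor_space n d \<longrightarrow>
        T i (T i x) = (\<lambda>s. (qv * qt - inverse qv * qt) * T i x s + qt ^ 2 * x s)
        \<and> (j = i + 1 \<longrightarrow> T i (T j (T i x)) = T j (T i (T j x)))
        \<and> ((i + 1 < j \<or> j + 1 < i) \<longrightarrow> T i (T j x) = T j (T i x)))"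
proof (intro conjI allI impI; elim conjE)
  fix i j :: nat and x :: "nat list \<Rightarrow> Qvt"
  assume "1 \<le> i" "i \<le> d - 1" "x \<in> tensor_space n d"
  then have i: "1 \<le> i" "i < d" and x: "x \<in> tensor_space n d"
    by auto
  show "T i x \<in> tensor_space n d"
    unfolding T_def using act_preserves_tensor_space[OF i x] .
  show "T i (T i x) = (\<lambda>s. (qv * qt - inverse qv * qt) * T i x s + qt ^ 2 * x s)"
    unfolding T_def using quadratic_relation[OF qv_nonzero i x] .
  assume "1 \<le> j" "j \<le> d - 1"
  then have j: "1 \<le> j" "j < d"
    by auto
  show "T i (T j (T i x)) = T j (T i (T j x))" if "j = i + 1"
    unfolding T_def using braid_relation[OF qv_nonzero i(1) _ x] that j by simp
  show "T i (T j x) = T j (T i x)" if "i + 1 < j \<or> j + 1 < i"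
    unfolding T_def using far_commutation[OF qv_nonzero] i j x that by (metis Suc_eq_plus1)
qed

end
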